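(* Let $(M,\nabla_0)$ be a flat hom-connection with respect to a differential graded algebra $\Omega A$, with extensions $\nabla_n:\mathrm{Hom}_A(\Omega^{n+1}A,M)\to\mathrm{Hom}_A(\Omega^nA,M)$, $\nabla_n(f)(\omega)=\nabla_0(f\omega)+(-1)^{n+1}f(d\omega)$. Then: (a) $\nabla_{n-1}\circ\nabla_n=0$ for all $n\ge1$, so $\cdots\xrightarrow{\nabla_2}\mathrm{Hom}_A(\Omega^2A,M)\xrightarrow{\nabla_1}\mathrm{Hom}_A(\Omega^1A,M)\xrightarrow{\nabla_0}M$ is a chain complex; denote its homology by $H_*(A;M,\nabla_* )$ (with $\mathrm{Hom}_A(\Omega^kA,M)$ in degree $k$). (b) The right action of $\Omega A$ on $\bigoplus_{n\ge0}\mathrm{Hom}_A(\Omega^nA,M)$, $(f\omega)(\omega')=f(\omega\omega')$, descends to a right action of the cohomology $H^*(A)$ of $(\Omega A,d)$ on $H_*(A;M,\nabla_* )$, given by $[f]\cdot[\omega]=[f\omega]$.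
   Context: All algebras are associative and unital over a field $k$. $\Omega A=\bigoplus_{n\ge0}\Omega^nA$, $\Omega^0A=A$, is a differential graded algebra with degree-one differential $d$, $d^2=0$, satisfying the graded Leibniz rule. $M$ is a right $A$-module; $\mathrm{Hom}_A$ denotes right $A$-linear maps; $\mathrm{Hom}_A(\Omega^1A,M)$ is a right $A$-module via $(fa)(\omega)=f(a\omega)$; $\mathrm{Hom}_A(A,M)\cong M$. For $\omega\in\Omega^nA$ and $f\in\mathrm{Hom}_A(\Omega^{n+m}A,M)$, $f\omega\in\mathrm{Hom}_A(\Omega^mA,M)$ is $(f\omega)(\omega')=f(\omega\omega')$. A hom-connection is a $k$-linear map $\nabla_0:\mathrm{Hom}_A(\Omega^1A,M)\to M$ with $\nabla_0(fa)=\nabla_0(f)a+f(da)$ for all $f$ and $a\in A$. Its curvature is $F=\nabla_0\circ\nabla_1:\mathrm{Hom}_A(\Omega^2A,M)\to M$, and the hom-connection is called flat if $F=0$. *)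

theory Defs
  imports Main
begin

text \<open>
The total DGA \<Omega>A is a ring of type 'w (a k-algebra via a central unital ring
homomorphism iota from the field 'k); its homogeneous pieces are the subsets Om n, with
Om 0 = A. The right A-module M is a type 'm with right action act (only its values on
elements of Om 0 matter). Elements of Hom_A(\<Omega>^n A, M) are represented as functions
'w => 'm that are additive and right A-linear on Om n and vanish outside Om n.
\<close>

definition graded_dga ::
  "('k::field \<Rightarrow> 'w::ring_1) \<Rightarrow> (nat \<Rightarrow> 'w set) \<Rightarrow> ('w \<Rightarrow> 'w) \<Rightarrow> bool" where
  "graded_dga iota Om d \<longleftrightarrow>
     \<comment> \<open>k-algebra structure: iota is a unital ring homomorphism into the centre\<close>
     iota 1 = 1 \<and> (\<forall>a b. iota (a + b) = iota a + iota b) \<and> (\<forall>a b. iota (a * b) = iota a * iota b)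
   \<and> (\<forall>c x. iota c * x = x * iota c)
     \<comment> \<open>each Om n is a k-subspace\<close>
   \<and> (\<forall>n. 0 \<in> Om n \<and> (\<forall>x\<in>Om n. \<forall>y\<in>Om n. x + y \<in> Om n)
          \<and> (\<forall>c. \<forall>x\<in>Om n. iota c * x \<in> Om n))
     \<comment> \<open>grading of the algebra\<close>
   \<and> 1 \<in> Om 0
   \<and> (\<forall>n m. \<forall>x\<in>Om n. \<forall>y\<in>Om m. x * y \<in> Om (n + m))
     \<comment> \<open>\<Omega>A is the direct sum of the Om n\<close>
   \<and> (\<forall>x. \<exists>!c. (\<forall>n. c n \<in> Om n) \<and> finite {n. c n \<noteq> 0} \<and> x = sum c {n. c n \<noteq> 0})
     \<comment> \<open>the differential: k-linear, of degree one, square zero, graded Leibniz rule\<close>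
   \<and> (\<forall>x y. d (x + y) = d x + d y) \<and> (\<forall>c x. d (iota c * x) = iota c * d x)
   \<and> (\<forall>n. \<forall>x\<in>Om n. d x \<in> Om (Suc n))
   \<and> (\<forall>x. d (d x) = 0)
   \<and> (\<forall>n m. \<forall>x\<in>Om n. \<forall>y\<in>Om m. d (x * y) = d x * y + (-1) ^ n * x * d y)"

definition right_module ::
  "(nat \<Rightarrow> 'w::ring_1 set) \<Rightarrow> ('m::ab_group_add \<Rightarrow> 'w \<Rightarrow> 'm) \<Rightarrow> bool" where
  "right_module Om act \<longleftrightarrow>
     (\<forall>m. act m 1 = m)
   \<and> (\<forall>m. \<forall>a\<in>Om 0. \<forall>b\<in>Om 0. act (act m a) b = act m (a * b))
   \<and> (\<forall>m m'. \<forall>a\<in>Om 0. act (m + m') a = act m a + act m' a)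
   \<and> (\<forall>m. \<forall>a\<in>Om 0. \<forall>b\<in>Om 0. act m (a + b) = act m a + act m b)"

text \<open>Hom_A(\<Omega>^n A, M), right A-linear maps (k-linearity follows, since k acts through A).\<close>
definition HomA ::
  "(nat \<Rightarrow> 'w::ring_1 set) \<Rightarrow> ('m::ab_group_add \<Rightarrow> 'w \<Rightarrow> 'm) \<Rightarrow> nat \<Rightarrow> ('w \<Rightarrow> 'm) set" where
  "HomA Om act n = {f.
      (\<forall>x\<in>Om n. \<forall>y\<in>Om n. f (x + y) = f x + f y)
    \<and> (\<forall>x\<in>Om n. \<forall>a\<in>Om 0. f (x * a) = act (f x) a)
    \<and> (\<forall>x. x \<notin> Om n \<longrightarrow> f x = 0)}"

text \<open>For f in Hom_A(\<Omega>^(k+deg w) A, M), homact Om k f w is f w in Hom_A(\<Omega>^k A, M):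
  (f w)(w') = f (w w').\<close>
definition homact ::
  "(nat \<Rightarrow> 'w::ring_1 set) \<Rightarrow> nat \<Rightarrow> ('w \<Rightarrow> 'm::ab_group_add) \<Rightarrow> 'w \<Rightarrow> ('w \<Rightarrow> 'm)" where
  "homact Om k f w = (\<lambda>w'. if w' \<in> Om k then f (w * w') else 0)"

definition signm :: "nat \<Rightarrow> 'm::ab_group_add \<Rightarrow> 'm" where
  "signm k x = (if even k then x else - x)"

definition hom_connection ::
  "('k::field \<Rightarrow> 'w::ring_1) \<Rightarrow> (nat \<Rightarrow> 'w set) \<Rightarrow> ('w \<Rightarrow> 'w) \<Rightarrow>
   ('m::ab_group_add \<Rightarrow> 'w \<Rightarrow> 'm) \<Rightarrow> (('w \<Rightarrow> 'm) \<Rightarrow> 'm) \<Rightarrow> bool" where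
  "hom_connection iota Om d act nabla0 \<longleftrightarrow>
     (\<forall>f\<in>HomA Om act 1. \<forall>g\<in>HomA Om act 1. nabla0 (\<lambda>x. f x + g x) = nabla0 f + nabla0 g)
   \<and> (\<forall>f\<in>HomA Om act 1. \<forall>c. nabla0 (\<lambda>x. act (f x) (iota c)) = act (nabla0 f) (iota c))
   \<and> (\<forall>f\<in>HomA Om act 1. \<forall>a\<in>Om 0.
        nabla0 (homact Om 1 f a) = act (nabla0 f) a + f (d a))"

text \<open>For n = 0 this is nabla_0 composed
  with the identification M = Hom_A(A, M), m \<mapsto> (a \<mapsto> m a).\<close>
definition nablaE ::
  "(nat \<Rightarrow> 'w::ring_1 set) \<Rightarrow> ('w \<Rightarrow> 'w) \<Rightarrow> (('w \<Rightarrow> 'm::ab_group_add) \<Rightarrow> 'm) \<Rightarrow>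
   nat \<Rightarrow> ('w \<Rightarrow> 'm) \<Rightarrow> ('w \<Rightarrow> 'm)" where
  "nablaE Om d nabla0 n f =
     (\<lambda>w. if w \<in> Om n then nabla0 (homact Om 1 f w) + signm (n + 1) (f (d w)) else 0)"

definition flat_hom_connection ::
  "('k::field \<Rightarrow> 'w::ring_1) \<Rightarrow> (nat \<Rightarrow> 'w set) \<Rightarrow> ('w \<Rightarrow> 'w) \<Rightarrow>
   ('m::ab_group_add \<Rightarrow> 'w \<Rightarrow> 'm) \<Rightarrow> (('w \<Rightarrow> 'm) \<Rightarrow> 'm) \<Rightarrow> bool" where
  "flat_hom_connection iota Om d act nabla0 \<longleftrightarrow>
     hom_connection iota Om d act nabla0
   \<and> (\<forall>f\<in>HomA Om act 2. nabla0 (nablaE Om d nabla0 1 f) = 0)"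

definition cycles where
  "cycles Om d act nabla0 n =
     {f \<in> HomA Om act n. n = 0 \<or> nablaE Om d nabla0 (n - 1) f = (\<lambda>_. 0)}"

definition boundaries where
  "boundaries Om d act nabla0 n = nablaE Om d nabla0 n ` HomA Om act (Suc n)"

definition hclass where
  "hclass Om d act nabla0 n f =
     {g \<in> cycles Om d act nabla0 n. (\<lambda>x. g x - f x) \<in> boundaries Om d act nabla0 n}"

definition closedf :: "(nat \<Rightarrow> 'w::ring_1 set) \<Rightarrow> ('w \<Rightarrow> 'w) \<Rightarrow> nat \<Rightarrow> 'w set" where
  "closedf Om d m = {w \<in> Om m. d w = 0}"

definition exactf :: "(nat \<Rightarrow> 'w::ring_1 set) \<Rightarrow> ('w \<Rightarrow> 'w) \<Rightarrow> nat \<Rightarrow> 'w set" where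
  "exactf Om d m = (if m = 0 then {0} else d ` Om (m - 1))"

definition cclass :: "(nat \<Rightarrow> 'w::ring_1 set) \<Rightarrow> ('w \<Rightarrow> 'w) \<Rightarrow> nat \<Rightarrow> 'w \<Rightarrow> 'w set" where
  "cclass Om d m w = {v \<in> closedf Om d m. v - w \<in> exactf Om d m}"

end

theory Submission
  imports Defs
begin

text \<open>
Everything rests on a graded Leibniz rule for the extended hom-connection with respect to the
right action of \<Omega>A: for u in Hom_A(\<Omega>^(n+1) A, M) and w of degree m, one has
(\<nabla>_n u) w = \<nabla>_(n-m) (u w) + (-1)^(n+1) u (d w).
Applied with m = n - 1 it expresses \<nabla>_(n-1) \<nabla>_n f through \<nabla>_0 \<nabla>_1 of the degree-two map
f w, which vanishes by flatness, and a term that cancels. Applied to closed w it shows that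
right multiplication by w maps cycles to cycles and boundaries to boundaries, and applied to
a cycle f and an arbitrary v it shows that f (d v) is a boundary; so the action descends to
homology and cohomology.
\<close>

lemma signm_simps [simp]:
  "signm j (a + b) = signm j a + signm j b"
  "signm j (- a) = - signm j a"
  "signm j 0 = 0"
  "signm j (signm j a) = a"
  by (simp_all add: signm_def)

locale dg_algebra =
  fixes iota :: "'k::field \<Rightarrow> 'w::ring_1"
    and Om :: "nat \<Rightarrow> 'w set"
    and d :: "'w \<Rightarrow> 'w"
  assumes dga: "graded_dga iota Om d"
begin

lemma iota_add: "iota (a + b) = iota a + iota b"
  using dga by (simp add: graded_dga_def)

lemma iota_minus_one: "iota (- 1) = - 1"
proof -
  have "iota 1 = 1" using dga by (simp add: graded_dga_def)
  moreover have "iota 0 = 0" using iota_add[of 0 0] by simp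
  ultimately have "iota (- 1) + 1 = 0" using iota_add[of "- 1" 1] by simp
  then show ?thesis by (simp add: eq_neg_iff_add_eq_0)
qed

lemma Om_zero: "0 \<in> Om n"
  using dga by (simp add: graded_dga_def)

lemma Om_add: "x \<in> Om n \<Longrightarrow> y \<in> Om n \<Longrightarrow> x + y \<in> Om n"
  using dga by (simp add: graded_dga_def)

lemma Om_uminus: "x \<in> Om n \<Longrightarrow> - x \<in> Om n"
  using dga iota_minus_one unfolding graded_dga_def by (metis mult_minus1)

lemma Om_diff: "x \<in> Om n \<Longrightarrow> y \<in> Om n \<Longrightarrow> x - y \<in> Om n"
  using Om_add[of x n "- y"] Om_uminus[of y n] by simp

lemma Om_mult: "x \<in> Om n \<Longrightarrow> y \<in> Om m \<Longrightarrow> x * y \<in> Om (n + m)"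
  using dga by (simp add: graded_dga_def)

lemma d_add: "d (x + y) = d x + d y"
  using dga by (simp add: graded_dga_def)

lemma d_Om: "x \<in> Om n \<Longrightarrow> d x \<in> Om (Suc n)"
  using dga by (simp add: graded_dga_def)

lemma d_d [simp]: "d (d x) = 0"
  using dga by (simp add: graded_dga_def)

lemma d_mult:
  assumes "x \<in> Om n" and "y \<in> Om m"
  shows "d (x * y) = d x * y + (if even n then x * d y else - (x * d y))"
proof -
  have "d (x * y) = d x * y + (-1) ^ n * x * d y"
    using dga assms by (simp add: graded_dga_def)
  then show ?thesis by (simp add: minus_one_power_iff)
qed

lemma HomA_add: "f \<in> HomA Om act n \<Longrightarrow> x \<in> Om n \<Longrightarrow> y \<in> Om n \<Longrightarrow> f (x + y) = f x + f y"
  by (simp add: HomA_def)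

lemma HomA_mult_right: "f \<in> HomA Om act n \<Longrightarrow> x \<in> Om n \<Longrightarrow> a \<in> Om 0 \<Longrightarrow> f (x * a) = act (f x) a"
  by (simp add: HomA_def)

lemma HomA_outside: "f \<in> HomA Om act n \<Longrightarrow> x \<notin> Om n \<Longrightarrow> f x = 0"
  by (simp add: HomA_def)

lemma HomA_zero: "f \<in> HomA Om act n \<Longrightarrow> f 0 = 0"
  using HomA_add[of f act n 0 0] Om_zero by simp

lemma HomA_uminus_arg: "f \<in> HomA Om act n \<Longrightarrow> x \<in> Om n \<Longrightarrow> f (- x) = - f x"
  using HomA_add[of f act n x "- x"] HomA_zero[of f act n] Om_uminus[of x n]
  by (simp add: eq_neg_iff_add_eq_0 add.commute)

lemma HomA_diff_arg: "f \<in> HomA Om act n \<Longrightarrow> x \<in> Om n \<Longrightarrow> y \<in> Om n \<Longrightarrow> f (x - y) = f x - f y"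
  using HomA_add[of f act n x "- y"] HomA_uminus_arg[of f act n y] Om_uminus[of y n] by simp

lemma HomA_sign_arg:
  "f \<in> HomA Om act n \<Longrightarrow> x \<in> Om n \<Longrightarrow> f (if even j then x else - x) = signm j (f x)"
  by (simp add: signm_def HomA_uminus_arg)

lemma HomA_d_mult:
  assumes f: "f \<in> HomA Om act (Suc (n + m))" and x: "x \<in> Om n" and y: "y \<in> Om m"
  shows "f (d (x * y)) = f (d x * y) + signm n (f (x * d y))"
proof -
  have dxy: "d x * y \<in> Om (Suc (n + m))" using Om_mult[OF d_Om[OF x] y] by simp
  have xdy: "x * d y \<in> Om (Suc (n + m))" using Om_mult[OF x d_Om[OF y]] by simp
  have "(if even n then x * d y else - (x * d y)) \<in> Om (Suc (n + m))"
    using xdy Om_uminus by simp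
  then show ?thesis
    using HomA_add[OF f dxy] HomA_sign_arg[OF f xdy] by (simp only: d_mult[OF x y])
qed

lemma homact_HomA:
  assumes f: "f \<in> HomA Om act (m + k)" and w: "w \<in> Om m"
  shows "homact Om k f w \<in> HomA Om act k"
  unfolding HomA_def
proof (intro CollectI conjI ballI allI impI)
  fix x y assume x: "x \<in> Om k" and y: "y \<in> Om k"
  show "homact Om k f w (x + y) = homact Om k f w x + homact Om k f w y"
    using HomA_add[OF f Om_mult[OF w x] Om_mult[OF w y]] x y Om_add[OF x y]
    by (simp add: homact_def distrib_left)
next
  fix x a assume x: "x \<in> Om k" and a: "a \<in> Om 0"
  show "homact Om k f w (x * a) = act (homact Om k f w x) a"
    using HomA_mult_right[OF f Om_mult[OF w x] a] x Om_mult[OF x a]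
    by (simp add: homact_def mult.assoc)
qed (simp add: homact_def)

lemma homact_homact:
  assumes "x \<in> Om i" and "j = i + k"
  shows "homact Om k (homact Om j f w) x = homact Om k f (w * x)"
  using assms Om_mult[OF assms(1)] by (auto simp: homact_def mult.assoc)

lemma homact_one: "f \<in> HomA Om act n \<Longrightarrow> homact Om n f 1 = f"
  by (rule ext) (simp add: homact_def HomA_outside)

lemma homact_zero: "f \<in> HomA Om act n \<Longrightarrow> homact Om k f 0 = (\<lambda>_. 0)"
  by (rule ext) (simp add: homact_def HomA_zero)

lemma homact_const_zero [simp]: "homact Om k (\<lambda>_. 0) w = (\<lambda>_. 0)"
  by (simp add: homact_def)

lemma homact_add:
  assumes f: "f \<in> HomA Om act (m + k)" and w: "w \<in> Om m" and w': "w' \<in> Om m"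
  shows "homact Om k f (w + w') = (\<lambda>x. homact Om k f w x + homact Om k f w' x)"
  using HomA_add[OF f Om_mult[OF w] Om_mult[OF w']] by (auto simp: homact_def distrib_right)

lemma homact_diff:
  assumes f: "f \<in> HomA Om act (m + k)" and w: "w \<in> Om m" and w': "w' \<in> Om m"
  shows "homact Om k f (w - w') = (\<lambda>x. homact Om k f w x - homact Om k f w' x)"
  using HomA_diff_arg[OF f Om_mult[OF w] Om_mult[OF w']] by (auto simp: homact_def left_diff_distrib)

end

locale dg_right_module = dg_algebra iota Om d
  for iota :: "'k::field \<Rightarrow> 'w::ring_1" and Om and d +
  fixes act :: "'m::ab_group_add \<Rightarrow> 'w \<Rightarrow> 'm"
  assumes module: "right_module Om act"
begin

lemma act_add_left: "a \<in> Om 0 \<Longrightarrow> act (x + y) a = act x a + act y a"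
  using module by (simp add: right_module_def)

lemma act_uminus_left: "a \<in> Om 0 \<Longrightarrow> act (- x) a = - act x a"
  using act_add_left[of a x "- x"] act_add_left[of a 0 0]
  by (simp add: eq_neg_iff_add_eq_0 add.commute)

lemma act_signm: "a \<in> Om 0 \<Longrightarrow> act (signm j x) a = signm j (act x a)"
  by (simp add: signm_def act_uminus_left)

lemma HomA_plus:
  assumes f: "f \<in> HomA Om act n" and g: "g \<in> HomA Om act n"
  shows "(\<lambda>x. f x + g x) \<in> HomA Om act n"
  using f g Om_add unfolding HomA_def by (simp add: act_add_left add_ac)

lemma HomA_uminus:
  assumes f: "f \<in> HomA Om act n"
  shows "(\<lambda>x. - f x) \<in> HomA Om act n"
  using f unfolding HomA_def by (simp add: act_uminus_left)

lemma HomA_const_zero: "(\<lambda>_. 0) \<in> HomA Om act n"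
  using act_add_left[of _ 0 0] unfolding HomA_def by simp

lemma HomA_signm: "f \<in> HomA Om act n \<Longrightarrow> (\<lambda>x. signm j (f x)) \<in> HomA Om act n"
  using HomA_uminus[of f n] by (cases "even j") (simp_all add: signm_def)

end

locale hom_connection_module = dg_right_module iota Om d act
  for iota :: "'k::field \<Rightarrow> 'w::ring_1" and Om and d and act :: "'m::ab_group_add \<Rightarrow> 'w \<Rightarrow> 'm" +
  fixes nabla0 :: "('w \<Rightarrow> 'm) \<Rightarrow> 'm"
  assumes hom_conn: "hom_connection iota Om d act nabla0"
begin

abbreviation nabla :: "nat \<Rightarrow> ('w \<Rightarrow> 'm) \<Rightarrow> 'w \<Rightarrow> 'm" where
  "nabla \<equiv> nablaE Om d nabla0"

lemma nabla0_add:
  "f \<in> HomA Om act 1 \<Longrightarrow> g \<in> HomA Om act 1 \<Longrightarrow> nabla0 (\<lambda>x. f x + g x) = nabla0 f + nabla0 g"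
  using hom_conn by (simp add: hom_connection_def)

lemma nabla0_zero: "nabla0 (\<lambda>_. 0) = 0"
  using nabla0_add[OF HomA_const_zero HomA_const_zero] by simp

lemma nabla0_uminus: "f \<in> HomA Om act 1 \<Longrightarrow> nabla0 (\<lambda>x. - f x) = - nabla0 f"
  using nabla0_add[of f "\<lambda>x. - f x"] HomA_uminus[of f 1] nabla0_zero
  by (simp add: eq_neg_iff_add_eq_0 add.commute)

lemma nabla0_signm: "f \<in> HomA Om act 1 \<Longrightarrow> nabla0 (\<lambda>x. signm j (f x)) = signm j (nabla0 f)"
  by (simp add: signm_def nabla0_uminus)

lemma nabla0_leibniz:
  "f \<in> HomA Om act 1 \<Longrightarrow> a \<in> Om 0 \<Longrightarrow> nabla0 (homact Om 1 f a) = act (nabla0 f) a + f (d a)"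
  using hom_conn by (simp add: hom_connection_def)

lemma nabla_apply: "x \<in> Om n \<Longrightarrow> nabla n f x = nabla0 (homact Om 1 f x) + signm (Suc n) (f (d x))"
  by (simp add: nablaE_def)

lemma nabla_outside: "x \<notin> Om n \<Longrightarrow> nabla n f x = 0"
  by (simp add: nablaE_def)

lemma homact_one_HomA: "f \<in> HomA Om act (Suc n) \<Longrightarrow> x \<in> Om n \<Longrightarrow> homact Om 1 f x \<in> HomA Om act 1"
  using homact_HomA[of f act n 1 x] by simp

lemma nabla_HomA:
  assumes f: "f \<in> HomA Om act (Suc n)"
  shows "nabla n f \<in> HomA Om act n"
  unfolding HomA_def
proof (intro CollectI conjI ballI allI impI)
  fix x y assume x: "x \<in> Om n" and y: "y \<in> Om n"
  have "homact Om 1 f (x + y) = (\<lambda>z. homact Om 1 f x z + homact Om 1 f y z)"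
    using homact_add[of f act n 1 x y] f x y by simp
  then show "nabla n f (x + y) = nabla n f x + nabla n f y"
    using nabla0_add[OF homact_one_HomA[OF f x] homact_one_HomA[OF f y]]
      HomA_add[OF f d_Om[OF x] d_Om[OF y]]
    by (simp add: nabla_apply x y Om_add d_add add_ac)
next
  fix x a assume x: "x \<in> Om n" and a: "a \<in> Om 0"
  have "homact Om 1 f (x * a) = homact Om 1 (homact Om 1 f x) a"
    by (rule homact_homact[OF a, symmetric]) simp
  then have "nabla0 (homact Om 1 f (x * a)) = act (nabla0 (homact Om 1 f x)) a + f (x * d a)"
    using nabla0_leibniz[OF homact_one_HomA[OF f x] a] d_Om[OF a] by (simp add: homact_def)
  moreover have "f (d (x * a)) = act (f (d x)) a + signm n (f (x * d a))"
    using HomA_d_mult[of f act n 0 x a] f x a HomA_mult_right[OF f d_Om[OF x] a] by simp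
  ultimately show "nabla n f (x * a) = act (nabla n f x) a"
    using Om_mult[OF x a]
    by (simp add: nabla_apply x act_add_left[OF a] act_signm[OF a] act_uminus_left[OF a] signm_def)
qed (rule nabla_outside)

text \<open>The term w \<cdot> d x of d (w x) carries the sign (-1)^(n+1) \<cdot> (-1)^m = (-1)^(k+1) of \<nabla>_k,
  so only the term d w \<cdot> x is left over.\<close>
lemma nabla_homact:
  assumes u: "u \<in> HomA Om act (Suc n)" and w: "w \<in> Om m" and n: "n = m + k"
  shows "homact Om k (nabla n u) w
       = (\<lambda>x. nabla k (homact Om (Suc k) u w) x + signm (Suc n) (homact Om k u (d w) x))"
proof (rule ext)
  fix x show "homact Om k (nabla n u) w x
      = nabla k (homact Om (Suc k) u w) x + signm (Suc n) (homact Om k u (d w) x)"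
  proof (cases "x \<in> Om k")
    case x: True
    have "homact Om 1 (homact Om (Suc k) u w) x = homact Om 1 u (w * x)"
      by (rule homact_homact[OF x]) simp
    moreover have "u (d (w * x)) = u (d w * x) + signm m (u (w * d x))"
      using HomA_d_mult[of u act m k w x] u w x n by simp
    ultimately show ?thesis
      using x Om_mult[OF w x] d_Om[OF x] n
      by (simp add: homact_def nabla_apply signm_def)
  qed (simp add: homact_def nabla_outside)
qed

lemma nabla_homact_closed:
  assumes u: "u \<in> HomA Om act (Suc n)" and w: "w \<in> closedf Om d m" and n: "n = m + k"
  shows "homact Om k (nabla n u) w = nabla k (homact Om (Suc k) u w)"
  using nabla_homact[OF u _ n, of w] w homact_zero[OF u] by (simp add: closedf_def)

lemma nabla_plus:
  assumes f: "f \<in> HomA Om act (Suc n)" and g: "g \<in> HomA Om act (Suc n)"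
  shows "nabla n (\<lambda>x. f x + g x) = (\<lambda>x. nabla n f x + nabla n g x)"
proof (rule ext)
  fix x show "nabla n (\<lambda>x. f x + g x) x = nabla n f x + nabla n g x"
  proof (cases "x \<in> Om n")
    case x: True
    have "homact Om 1 (\<lambda>x. f x + g x) x = (\<lambda>z. homact Om 1 f x z + homact Om 1 g x z)"
      by (rule ext) (simp add: homact_def)
    then show ?thesis
      using nabla0_add[OF homact_one_HomA[OF f x] homact_one_HomA[OF g x]]
      by (simp add: nabla_apply x add_ac)
  qed (simp add: nabla_outside)
qed

lemma nabla_uminus:
  assumes f: "f \<in> HomA Om act (Suc n)"
  shows "nabla n (\<lambda>x. - f x) = (\<lambda>x. - nabla n f x)"
proof (rule ext)
  fix x show "nabla n (\<lambda>x. - f x) x = - nabla n f x"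
  proof (cases "x \<in> Om n")
    case x: True
    have "homact Om 1 (\<lambda>x. - f x) x = (\<lambda>z. - homact Om 1 f x z)"
      by (rule ext) (simp add: homact_def)
    then show ?thesis
      using nabla0_uminus[OF homact_one_HomA[OF f x]] by (simp add: nabla_apply x)
  qed (simp add: nabla_outside)
qed

end

locale flat_hom_connection_module = hom_connection_module +
  assumes flat: "\<forall>f\<in>HomA Om act 2. nabla0 (nablaE Om d nabla0 1 f) = 0"
begin

lemma nabla_nabla:
  assumes f: "f \<in> HomA Om act (Suc (Suc j))"
  shows "nabla j (nabla (Suc j) f) = (\<lambda>_. 0)"
proof (rule ext)
  fix x show "nabla j (nabla (Suc j) f) x = 0"
  proof (cases "x \<in> Om j")
    case x: True
    define N where "N = nabla0 (homact Om 1 f (d x))"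
    have fx: "homact Om 2 f x \<in> HomA Om act 2"
      using homact_HomA[of f act j 2 x] f x by simp
    have nabla_fx: "nabla 1 (homact Om 2 f x) \<in> HomA Om act 1"
      using nabla_HomA[of "homact Om 2 f x" 1] fx by (simp add: numeral_2_eq_2)
    have fdx: "homact Om 1 f (d x) \<in> HomA Om act 1"
      by (rule homact_one_HomA[OF f d_Om[OF x]])
    have "homact Om 1 (nabla (Suc j) f) x
        = (\<lambda>y. nabla 1 (homact Om 2 f x) y + signm (Suc (Suc j)) (homact Om 1 f (d x) y))"
      using nabla_homact[OF f x, of 1] by (simp add: numeral_2_eq_2)
    then have "nabla0 (homact Om 1 (nabla (Suc j) f) x) = signm j N"
      using nabla0_add[OF nabla_fx HomA_signm[OF fdx]] flat fx nabla0_signm[OF fdx]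
      by (simp add: N_def signm_def)
    moreover have "nabla (Suc j) f (d x) = N"
      using HomA_zero[OF f] by (simp add: nabla_apply d_Om[OF x] N_def)
    ultimately show ?thesis by (simp add: nabla_apply x signm_def)
  qed (rule nabla_outside)
qed

lemma cycles_HomA: "f \<in> cycles Om d act nabla0 n \<Longrightarrow> f \<in> HomA Om act n"
  by (simp add: cycles_def)

lemma cycles_nabla: "f \<in> cycles Om d act nabla0 (Suc n) \<Longrightarrow> nabla n f = (\<lambda>_. 0)"
  by (simp add: cycles_def)

lemma boundaries_zero: "(\<lambda>_. 0) \<in> boundaries Om d act nabla0 n"
proof -
  have "nabla n (\<lambda>_. 0) = (\<lambda>_. 0)"
    by (rule ext) (simp add: nablaE_def homact_def nabla0_zero)
  then show ?thesis
    unfolding boundaries_def by (rule image_eqI[OF sym HomA_const_zero])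
qed

lemma boundaries_plus:
  assumes "b \<in> boundaries Om d act nabla0 n" and "c \<in> boundaries Om d act nabla0 n"
  shows "(\<lambda>x. b x + c x) \<in> boundaries Om d act nabla0 n"
proof -
  obtain u v where u: "u \<in> HomA Om act (Suc n)" "b = nabla n u"
    and v: "v \<in> HomA Om act (Suc n)" "c = nabla n v"
    using assms unfolding boundaries_def by blast
  then have "(\<lambda>x. b x + c x) = nabla n (\<lambda>x. u x + v x)"
    using nabla_plus[OF u(1) v(1)] by simp
  then show ?thesis
    unfolding boundaries_def by (rule image_eqI[OF _ HomA_plus[OF u(1) v(1)]])
qed

lemma boundaries_uminus:
  assumes "b \<in> boundaries Om d act nabla0 n"
  shows "(\<lambda>x. - b x) \<in> boundaries Om d act nabla0 n"
proof -
  obtain u where u: "u \<in> HomA Om act (Suc n)" "b = nabla n u"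
    using assms unfolding boundaries_def by blast
  then have "(\<lambda>x. - b x) = nabla n (\<lambda>x. - u x)"
    using nabla_uminus[OF u(1)] by simp
  then show ?thesis
    unfolding boundaries_def by (rule image_eqI[OF _ HomA_uminus[OF u(1)]])
qed

lemma boundaries_signm:
  "b \<in> boundaries Om d act nabla0 n \<Longrightarrow> (\<lambda>x. signm j (b x)) \<in> boundaries Om d act nabla0 n"
  using boundaries_uminus[of b n] by (cases "even j") (simp_all add: signm_def)

lemma hclass_eqI:
  assumes "(\<lambda>x. g' x - g x) \<in> boundaries Om d act nabla0 n"
  shows "hclass Om d act nabla0 n g' = hclass Om d act nabla0 n g"
  unfolding hclass_def
proof (intro Collect_cong conj_cong refl iffI)
  fix h assume "(\<lambda>x. h x - g' x) \<in> boundaries Om d act nabla0 n"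
  from boundaries_plus[OF this assms]
  show "(\<lambda>x. h x - g x) \<in> boundaries Om d act nabla0 n" by simp
next
  fix h assume "(\<lambda>x. h x - g x) \<in> boundaries Om d act nabla0 n"
  from boundaries_plus[OF this boundaries_uminus[OF assms]]
  show "(\<lambda>x. h x - g' x) \<in> boundaries Om d act nabla0 n" by simp
qed

lemma cycles_homact:
  assumes f: "f \<in> cycles Om d act nabla0 (m + k)" and w: "w \<in> closedf Om d m"
  shows "homact Om k f w \<in> cycles Om d act nabla0 k"
proof (cases k)
  case 0
  then show ?thesis
    using homact_HomA[OF cycles_HomA[OF f]] w by (simp add: cycles_def closedf_def)
next
  case (Suc i)
  have fH: "f \<in> HomA Om act (Suc (m + i))" using cycles_HomA[OF f] Suc by simp
  have "nabla i (homact Om (Suc i) f w) = homact Om i (nabla (m + i) f) w"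
    by (rule nabla_homact_closed[OF fH w refl, symmetric])
  also have "\<dots> = (\<lambda>_. 0)"
    using cycles_nabla[of f "m + i"] f Suc by simp
  finally have "nabla (k - 1) (homact Om k f w) = (\<lambda>_. 0)"
    using Suc by simp
  moreover have "homact Om k f w \<in> HomA Om act k"
    using homact_HomA[OF cycles_HomA[OF f]] w by (simp add: closedf_def)
  ultimately show ?thesis by (simp add: cycles_def)
qed

lemma boundaries_homact:
  assumes b: "b \<in> boundaries Om d act nabla0 (m + k)" and w: "w \<in> closedf Om d m"
  shows "homact Om k b w \<in> boundaries Om d act nabla0 k"
proof -
  obtain u where u: "u \<in> HomA Om act (Suc (m + k))" and b_eq: "b = nabla (m + k) u"
    using b unfolding boundaries_def by blast
  have "homact Om (Suc k) u w \<in> HomA Om act (Suc k)"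
    using homact_HomA[of u act m "Suc k" w] u w by (simp add: closedf_def)
  then show ?thesis
    unfolding b_eq nabla_homact_closed[OF u w refl] boundaries_def by blast
qed

lemma homact_d_boundaries:
  assumes f: "f \<in> cycles Om d act nabla0 (Suc (j + k))" and v: "v \<in> Om j"
  shows "homact Om k f (d v) \<in> boundaries Om d act nabla0 k"
proof -
  let ?b = "nabla k (homact Om (Suc k) f v)"
  have fH: "f \<in> HomA Om act (Suc (j + k))" by (rule cycles_HomA[OF f])
  have "?b \<in> boundaries Om d act nabla0 k"
    using homact_HomA[of f act j "Suc k" v] fH v unfolding boundaries_def by simp
  moreover have "homact Om k f (d v) = (\<lambda>x. signm (Suc (j + k)) (- ?b x))"
  proof (rule ext)
    fix x
    have "?b x + signm (Suc (j + k)) (homact Om k f (d v) x) = 0"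
      using fun_cong[OF nabla_homact[OF fH v refl], of x] by (simp add: cycles_nabla[OF f])
    then have "signm (Suc (j + k)) (homact Om k f (d v) x) = - ?b x"
      by (simp add: eq_neg_iff_add_eq_0 add.commute)
    then show "homact Om k f (d v) x = signm (Suc (j + k)) (- ?b x)"
      by (metis signm_simps(4))
  qed
  ultimately show ?thesis using boundaries_signm boundaries_uminus by simp
qed

lemma exactf_Om: "v \<in> exactf Om d m \<Longrightarrow> v \<in> Om m"
  by (cases m) (auto simp: exactf_def Om_zero intro: d_Om)

lemma hclass_homact_cong:
  assumes f: "f \<in> cycles Om d act nabla0 (m + k)"
    and f': "f' \<in> hclass Om d act nabla0 (m + k) f" and w': "w' \<in> cclass Om d m w"
  shows "hclass Om d act nabla0 k (homact Om k f' w') = hclass Om d act nabla0 k (homact Om k f w)"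
proof (rule hclass_eqI)
  have fH: "f \<in> HomA Om act (m + k)" by (rule cycles_HomA[OF f])
  have w'_closed: "w' \<in> closedf Om d m" and exact: "w' - w \<in> exactf Om d m"
    using w' by (auto simp: cclass_def)
  have w'_Om: "w' \<in> Om m" using w'_closed by (simp add: closedf_def)
  then have w_Om: "w \<in> Om m" using Om_diff[OF w'_Om exactf_Om[OF exact]] by simp
  have "homact Om k (\<lambda>x. f' x - f x) w' \<in> boundaries Om d act nabla0 k"
    using boundaries_homact[OF _ w'_closed] f' by (simp add: hclass_def)
  moreover have "homact Om k f (w' - w) \<in> boundaries Om d act nabla0 k"
  proof (cases m)
    case 0
    then show ?thesis using exact homact_zero[OF fH] boundaries_zero by (simp add: exactf_def)
  next
    case (Suc j)
    then obtain v where "v \<in> Om j" and "w' - w = d v" using exact by (auto simp: exactf_def)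
    then show ?thesis using homact_d_boundaries[of f j k v] f Suc by simp
  qed
  moreover have "(\<lambda>x. homact Om k f' w' x - homact Om k f w x)
      = (\<lambda>x. homact Om k (\<lambda>x. f' x - f x) w' x + homact Om k f (w' - w) x)"
    by (simp only: homact_diff[OF fH w'_Om w_Om]) (auto simp: homact_def)
  ultimately show "(\<lambda>x. homact Om k f' w' x - homact Om k f w x) \<in> boundaries Om d act nabla0 k"
    using boundaries_plus by simp
qed

end

theorem corollary3p5:
  fixes iota :: "'k::field \<Rightarrow> 'w::ring_1"
    and Om :: "nat \<Rightarrow> 'w set"
    and d :: "'w \<Rightarrow> 'w"
    and act :: "'m::ab_group_add \<Rightarrow> 'w \<Rightarrow> 'm"
    and nabla0 :: "('w \<Rightarrow> 'm) \<Rightarrow> 'm"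
  assumes dga: "graded_dga iota Om d"
    and module: "right_module Om act"
    and flat: "flat_hom_connection iota Om d act nabla0"
  shows
    "(\<forall>n. \<forall>f\<in>HomA Om act (Suc n). nablaE Om d nabla0 n f \<in> HomA Om act n)
   \<and> (\<forall>f\<in>HomA Om act 2. nabla0 (nablaE Om d nabla0 1 f) = 0)
   \<and> (\<forall>n\<ge>1. \<forall>f\<in>HomA Om act (Suc n).
        nablaE Om d nabla0 (n - 1) (nablaE Om d nabla0 n f) = (\<lambda>_. 0))
   \<and> (\<forall>n m f w. m \<le> n \<longrightarrow> f \<in> cycles Om d act nabla0 n \<longrightarrow> w \<in> closedf Om d m \<longrightarrow>
        homact Om (n - m) f w \<in> cycles Om d act nabla0 (n - m)
      \<and> (\<forall>f'\<in>hclass Om d act nabla0 n f. \<forall>w'\<in>cclass Om d m w.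
           hclass Om d act nabla0 (n - m) (homact Om (n - m) f' w')
         = hclass Om d act nabla0 (n - m) (homact Om (n - m) f w)))
   \<and> (\<forall>n f. f \<in> cycles Om d act nabla0 n \<longrightarrow>
        hclass Om d act nabla0 n (homact Om n f 1) = hclass Om d act nabla0 n f)
   \<and> (\<forall>n m m' f w w'. m + m' \<le> n \<longrightarrow> f \<in> cycles Om d act nabla0 n \<longrightarrow>
        w \<in> closedf Om d m \<longrightarrow> w' \<in> closedf Om d m' \<longrightarrow>
        hclass Om d act nabla0 (n - (m + m'))
          (homact Om (n - (m + m')) (homact Om (n - m) f w) w')
      = hclass Om d act nabla0 (n - (m + m')) (homact Om (n - (m + m')) f (w * w')))"
proof -
  interpret flat_hom_connection_module iota Om d act nabla0
    using dga module flat by unfold_locales (simp_all add: flat_hom_connection_def)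
  show ?thesis
  proof (intro conjI allI ballI impI)
    fix n f assume "f \<in> HomA Om act (Suc n)"
    then show "nablaE Om d nabla0 n f \<in> HomA Om act n" by (rule nabla_HomA)
  next
    fix f assume "f \<in> HomA Om act 2"
    then show "nabla0 (nablaE Om d nabla0 1 f) = 0" using local.flat by blast
  next
    fix n f assume "1 \<le> n" and "f \<in> HomA Om act (Suc n)"
    then show "nablaE Om d nabla0 (n - 1) (nablaE Om d nabla0 n f) = (\<lambda>_. 0)"
      using nabla_nabla by (cases n) auto
  next
    fix n m f w assume "m \<le> n" and "f \<in> cycles Om d act nabla0 n" and "w \<in> closedf Om d m"
    then show "homact Om (n - m) f w \<in> cycles Om d act nabla0 (n - m)"
      using cycles_homact[of f m "n - m" w] by simp
    fix f' w' assume "f' \<in> hclass Om d act nabla0 n f" and "w' \<in> cclass Om d m w"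
    then show "hclass Om d act nabla0 (n - m) (homact Om (n - m) f' w')
             = hclass Om d act nabla0 (n - m) (homact Om (n - m) f w)"
      using hclass_homact_cong[of f m "n - m" f' w' w] \<open>m \<le> n\<close> \<open>f \<in> cycles Om d act nabla0 n\<close>
      by simp
  next
    fix n f assume "f \<in> cycles Om d act nabla0 n"
    then have "homact Om n f 1 = f" by (rule homact_one[OF cycles_HomA])
    then show "hclass Om d act nabla0 n (homact Om n f 1) = hclass Om d act nabla0 n f" by simp
  next
    fix n m m' f w w' assume "m + m' \<le> n" and "w' \<in> closedf Om d m'"
    then show "hclass Om d act nabla0 (n - (m + m'))
          (homact Om (n - (m + m')) (homact Om (n - m) f w) w')
        = hclass Om d act nabla0 (n - (m + m')) (homact Om (n - (m + m')) f (w * w'))"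
      using homact_homact[of w' m' "n - m" "n - (m + m')" f w] by (simp add: closedf_def)
  qed
qed

end
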